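(* Let $G$ be an $X-Y$ normalized graph, let $S \subseteq N(X)$, and assume that no vertex of $S$ is adjacent to a vertex of $Y$. Let $K_1$ be an important $X-Y$ separator of $G$ disjoint with $S$ and let $K(S)$ be the important witness of $S$. Then $K_1 \geq K(S)$.
   Context: $G$ is a finite undirected graph and $X,Y$ are disjoint subsets of $V(G)$; $N(C)=(\bigcup_{v\in C}N(v))\setminus C$. An $X-Y$ separator is a set $K \subseteq V(G) \setminus (X \cup Y)$ such that $G \setminus K$ has no path from $X$ to $Y$; minimal means inclusion-minimal. $G$ is $X-Y$ normalized if $N(X)$ is the only minimum-cardinality $X-Y$ separator. Let $r$ be the minimum size of an $X-Y$ separator; the excess of an $X-Y$ separator $K$ is $|K|-r$. For $S\subseteq N(X)$, the cover excess $CE(S)$ is the excess of a smallest $X-Y$ separator disjoint with $S$. An $X-Y$ separator $K$ with $K\cap S=\emptyset$ and excess $CE(S)$ is a witness of $S$. $NR(G,Y,K)$ is the set of vertices not reachable from $Y$ in $G\setminus K$; $K \geq K'$ means $NR(G,Y,K)\supseteq NR(G,Y,K')$, and $K'<K$ means $K\geq K'$ and $NR(G,Y,K)\ne NR(G,Y,K')$. A minimal $X-Y$ separator $K$ is important if there is no $X-Y$ separator $K'$ with $K<K'$ and $|K|\geq|K'|$. An important witness of $S$ is a witness of $S$ that is an important $X-Y$ separator; under the hypotheses it exists and is unique, denoted $K(S)$. *)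

theory Defs
  imports Main
begin

definition graph :: "'a set \<Rightarrow> ('a \<Rightarrow> 'a \<Rightarrow> bool) \<Rightarrow> bool" where
  "graph V E \<longleftrightarrow> finite V \<and> (\<forall>u v. E u v \<longrightarrow> u \<in> V \<and> v \<in> V)
     \<and> (\<forall>u v. E u v \<longrightarrow> E v u) \<and> (\<forall>v. \<not> E v v)"

definition nbhd :: "('a \<Rightarrow> 'a \<Rightarrow> bool) \<Rightarrow> 'a set \<Rightarrow> 'a set" where
  "nbhd E C = {u. \<exists>v\<in>C. E v u} - C"

definition edges_in :: "('a \<Rightarrow> 'a \<Rightarrow> bool) \<Rightarrow> 'a set \<Rightarrow> ('a \<times> 'a) set" where
  "edges_in E W = {(u, v). u \<in> W \<and> v \<in> W \<and> E u v}"

definition reach :: "'a set \<Rightarrow> ('a \<Rightarrow> 'a \<Rightarrow> bool) \<Rightarrow> 'a set \<Rightarrow> 'a set \<Rightarrow> 'a set" where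
  "reach V E K A = {w. \<exists>a\<in>A \<inter> (V - K). (a, w) \<in> (edges_in E (V - K))\<^sup>*}"

definition is_sep :: "'a set \<Rightarrow> ('a \<Rightarrow> 'a \<Rightarrow> bool) \<Rightarrow> 'a set \<Rightarrow> 'a set \<Rightarrow> 'a set \<Rightarrow> bool" where
  "is_sep V E X Y K \<longleftrightarrow> K \<subseteq> V - (X \<union> Y) \<and> reach V E K X \<inter> Y = {}"

definition min_sep :: "'a set \<Rightarrow> ('a \<Rightarrow> 'a \<Rightarrow> bool) \<Rightarrow> 'a set \<Rightarrow> 'a set \<Rightarrow> 'a set \<Rightarrow> bool" where
  "min_sep V E X Y K \<longleftrightarrow> is_sep V E X Y K \<and> (\<forall>K'. K' \<subset> K \<longrightarrow> \<not> is_sep V E X Y K')"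

definition normalized :: "'a set \<Rightarrow> ('a \<Rightarrow> 'a \<Rightarrow> bool) \<Rightarrow> 'a set \<Rightarrow> 'a set \<Rightarrow> bool" where
  "normalized V E X Y \<longleftrightarrow> is_sep V E X Y (nbhd E X) \<and>
     (\<forall>K. is_sep V E X Y K \<longrightarrow> card (nbhd E X) \<le> card K \<and>
          (card K = card (nbhd E X) \<longrightarrow> K = nbhd E X))"

definition sep_num :: "'a set \<Rightarrow> ('a \<Rightarrow> 'a \<Rightarrow> bool) \<Rightarrow> 'a set \<Rightarrow> 'a set \<Rightarrow> nat" where
  "sep_num V E X Y = Min {card K | K. is_sep V E X Y K}"

definition excess :: "'a set \<Rightarrow> ('a \<Rightarrow> 'a \<Rightarrow> bool) \<Rightarrow> 'a set \<Rightarrow> 'a set \<Rightarrow> 'a set \<Rightarrow> nat" where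
  "excess V E X Y K = card K - sep_num V E X Y"

definition cover_excess :: "'a set \<Rightarrow> ('a \<Rightarrow> 'a \<Rightarrow> bool) \<Rightarrow> 'a set \<Rightarrow> 'a set \<Rightarrow> 'a set \<Rightarrow> nat" where
  "cover_excess V E X Y S =
     Min {card K | K. is_sep V E X Y K \<and> K \<inter> S = {}} - sep_num V E X Y"

definition witness :: "'a set \<Rightarrow> ('a \<Rightarrow> 'a \<Rightarrow> bool) \<Rightarrow> 'a set \<Rightarrow> 'a set \<Rightarrow> 'a set \<Rightarrow> 'a set \<Rightarrow> bool" where
  "witness V E X Y S K \<longleftrightarrow> is_sep V E X Y K \<and> K \<inter> S = {} \<and>
     excess V E X Y K = cover_excess V E X Y S"

definition NR :: "'a set \<Rightarrow> ('a \<Rightarrow> 'a \<Rightarrow> bool) \<Rightarrow> 'a set \<Rightarrow> 'a set \<Rightarrow> 'a set" where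
  "NR V E Y K = (V - K) - reach V E K Y"

definition sep_ge :: "'a set \<Rightarrow> ('a \<Rightarrow> 'a \<Rightarrow> bool) \<Rightarrow> 'a set \<Rightarrow> 'a set \<Rightarrow> 'a set \<Rightarrow> bool" where
  "sep_ge V E Y K K' \<longleftrightarrow> NR V E Y K' \<subseteq> NR V E Y K"

definition sep_less :: "'a set \<Rightarrow> ('a \<Rightarrow> 'a \<Rightarrow> bool) \<Rightarrow> 'a set \<Rightarrow> 'a set \<Rightarrow> 'a set \<Rightarrow> bool" where
  "sep_less V E Y K' K \<longleftrightarrow> sep_ge V E Y K K' \<and> NR V E Y K \<noteq> NR V E Y K'"

definition important :: "'a set \<Rightarrow> ('a \<Rightarrow> 'a \<Rightarrow> bool) \<Rightarrow> 'a set \<Rightarrow> 'a set \<Rightarrow> 'a set \<Rightarrow> bool" where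
  "important V E X Y K \<longleftrightarrow> min_sep V E X Y K \<and>
     \<not> (\<exists>K'. is_sep V E X Y K' \<and> sep_less V E Y K K' \<and> card K \<ge> card K')"

definition important_witness :: "'a set \<Rightarrow> ('a \<Rightarrow> 'a \<Rightarrow> bool) \<Rightarrow> 'a set \<Rightarrow> 'a set \<Rightarrow> 'a set \<Rightarrow> 'a set \<Rightarrow> bool" where
  "important_witness V E X Y S K \<longleftrightarrow> witness V E X Y S K \<and> important V E X Y K"

end

theory Submission
  imports Defs
begin

text \<open>Let \<open>A = NR(K\<^sub>1)\<close> and \<open>B = NR(K(S))\<close>, the sides of the two separators containing \<open>X\<close>.
  The neighbourhoods \<open>P = N(A \<union> B)\<close> and \<open>Q = N(A \<inter> B)\<close> are again \<open>X\<close>-\<open>Y\<close> separators, and they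
  satisfy the submodular inequality \<open>|P| + |Q| \<le> |K\<^sub>1| + |K(S)|\<close>. Since \<open>S \<subseteq> N(X)\<close> is reachable
  from \<open>X\<close> avoiding either separator, \<open>S \<subseteq> A \<inter> B\<close>, so \<open>Q\<close> avoids \<open>S\<close> and the witness property
  gives \<open>|K(S)| \<le> |Q|\<close>. Hence \<open>|P| \<le> |K\<^sub>1|\<close> while \<open>P\<close> lies beyond \<open>K\<^sub>1\<close>, and importance of \<open>K\<^sub>1\<close>
  forces \<open>NR(P) = A\<close>, i.e. \<open>B \<subseteq> A\<close>.\<close>

lemma rtrancl_edges_in_closed:
  "(a, w) \<in> (edges_in E W)\<^sup>* \<Longrightarrow> a \<in> W \<Longrightarrow> w \<in> W"
  by (induction rule: rtrancl_induct) (auto simp: edges_in_def)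

lemma rtrancl_edges_in_sym:
  assumes "\<forall>u v. E u v \<longrightarrow> E v u" and "(a, w) \<in> (edges_in E W)\<^sup>*"
  shows "(w, a) \<in> (edges_in E W)\<^sup>*"
  using assms(2)
proof (induction rule: rtrancl_induct)
  case (step y z)
  then have "(z, y) \<in> edges_in E W" using assms(1) by (auto simp: edges_in_def)
  then show ?case using step.IH by (meson converse_rtrancl_into_rtrancl)
qed simp

lemma reach_nbhd_subset:
  assumes "X \<subseteq> C"
  shows "reach V E (nbhd E C) X \<subseteq> C"
proof
  fix w assume "w \<in> reach V E (nbhd E C) X"
  then obtain a where "a \<in> X" and path: "(a, w) \<in> (edges_in E (V - nbhd E C))\<^sup>*"
    by (auto simp: reach_def)
  from path show "w \<in> C"
    by (induction rule: rtrancl_induct)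
      (use \<open>a \<in> X\<close> assms in \<open>auto simp: edges_in_def nbhd_def\<close>)
qed

lemma reach_nbhd_disjoint:
  assumes "\<forall>u v. E u v \<longrightarrow> E v u" and "Y \<inter> C = {}"
  shows "reach V E (nbhd E C) Y \<inter> C = {}"
proof -
  have "w \<notin> C" if w: "w \<in> reach V E (nbhd E C) Y" for w
  proof -
    obtain a where "a \<in> Y" and path: "(a, w) \<in> (edges_in E (V - nbhd E C))\<^sup>*"
      using w by (auto simp: reach_def)
    from path show ?thesis
      by (induction rule: rtrancl_induct)
        (use \<open>a \<in> Y\<close> assms in \<open>auto simp: edges_in_def nbhd_def\<close>)
  qed
  then show ?thesis by blast
qed

lemma is_sep_nbhd:
  assumes "graph V E" and "X \<subseteq> C" and "Y \<inter> C = {}" and "Y \<inter> nbhd E C = {}"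
  shows "is_sep V E X Y (nbhd E C)"
proof -
  have "nbhd E C \<subseteq> V - (X \<union> Y)"
    using assms by (auto simp: nbhd_def graph_def)
  then show ?thesis
    using reach_nbhd_subset[OF assms(2), of V E] assms(3) by (auto simp: is_sep_def)
qed

lemma subset_NR_nbhd:
  assumes "graph V E" and "C \<subseteq> V" and "Y \<inter> C = {}"
  shows "C \<subseteq> NR V E Y (nbhd E C)"
  using assms reach_nbhd_disjoint[of E Y C V]
  by (auto simp: NR_def nbhd_def graph_def)

lemma reach_subset_NR:
  assumes "\<forall>u v. E u v \<longrightarrow> E v u" and "is_sep V E X Y K"
  shows "reach V E K X \<subseteq> NR V E Y K"
proof
  fix w assume "w \<in> reach V E K X"
  then obtain a where a: "a \<in> X \<inter> (V - K)" "(a, w) \<in> (edges_in E (V - K))\<^sup>*"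
    by (auto simp: reach_def)
  have "w \<notin> reach V E K Y"
  proof
    assume "w \<in> reach V E K Y"
    then obtain b where b: "b \<in> Y \<inter> (V - K)" "(b, w) \<in> (edges_in E (V - K))\<^sup>*"
      by (auto simp: reach_def)
    have "(a, b) \<in> (edges_in E (V - K))\<^sup>*"
      using a(2) rtrancl_edges_in_sym[OF assms(1) b(2)] by simp
    then have "b \<in> reach V E K X" using a(1) by (auto simp: reach_def)
    then show False using assms(2) b(1) by (auto simp: is_sep_def)
  qed
  then show "w \<in> NR V E Y K"
    using rtrancl_edges_in_closed[OF a(2)] a(1) by (auto simp: NR_def)
qed

lemma subset_NR:
  assumes "\<forall>u v. E u v \<longrightarrow> E v u" and "is_sep V E X Y K" and "X \<subseteq> V"
  shows "X \<subseteq> NR V E Y K"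
proof -
  have "X \<subseteq> reach V E K X" using assms(2,3) by (auto simp: reach_def is_sep_def)
  then show ?thesis using reach_subset_NR[OF assms(1,2)] by blast
qed

lemma NR_disjoint:
  assumes "is_sep V E X Y K" and "Y \<subseteq> V"
  shows "Y \<inter> NR V E Y K = {}"
proof -
  have "Y \<subseteq> reach V E K Y" using assms by (auto simp: reach_def is_sep_def)
  then show ?thesis by (auto simp: NR_def)
qed

lemma nbhd_NR_subset:
  assumes "graph V E"
  shows "nbhd E (NR V E Y K) \<subseteq> K"
proof
  fix v assume "v \<in> nbhd E (NR V E Y K)"
  then obtain u where u: "u \<in> NR V E Y K" "E u v" "v \<notin> NR V E Y K"
    by (auto simp: nbhd_def)
  show "v \<in> K"
  proof (rule ccontr)
    assume "v \<notin> K"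
    moreover have "v \<in> V" using u(2) assms by (auto simp: graph_def)
    ultimately have "v \<in> reach V E K Y" using u(3) by (auto simp: NR_def)
    then obtain b where b: "b \<in> Y \<inter> (V - K)" "(b, v) \<in> (edges_in E (V - K))\<^sup>*"
      by (auto simp: reach_def)
    have "(v, u) \<in> edges_in E (V - K)"
      using u assms \<open>v \<notin> K\<close> \<open>v \<in> V\<close> by (auto simp: edges_in_def NR_def graph_def)
    then have "(b, u) \<in> (edges_in E (V - K))\<^sup>*" using b(2) by simp
    then have "u \<in> reach V E K Y" using b(1) by (auto simp: reach_def)
    then show False using u(1) by (auto simp: NR_def)
  qed
qed

lemma nbhd_subset_NR:
  assumes "graph V E" and "X \<subseteq> V" and "is_sep V E X Y K" and "K \<inter> S = {}"
    and "S \<subseteq> nbhd E X"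
  shows "S \<subseteq> NR V E Y K"
proof
  fix s assume s: "s \<in> S"
  then obtain x where x: "x \<in> X" "E x s" using assms(5) by (auto simp: nbhd_def)
  have "K \<inter> X = {}" using assms(3) by (auto simp: is_sep_def)
  then have "x \<in> X \<inter> (V - K)" using x(1) assms(2) by blast
  moreover have "s \<in> V - K" using x(2) s assms(1,4) by (auto simp: graph_def)
  ultimately have "(x, s) \<in> edges_in E (V - K)" using x(2) by (simp add: edges_in_def)
  then have "s \<in> reach V E K X"
    unfolding reach_def using \<open>x \<in> X \<inter> (V - K)\<close> by blast
  moreover have "\<forall>u v. E u v \<longrightarrow> E v u" using assms(1) by (simp add: graph_def)
  ultimately show "s \<in> NR V E Y K" using reach_subset_NR assms(3) by blast
qed

lemma card_nbhd_Un_Int_le: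
  assumes "finite K" and "finite K'" and "nbhd E A \<subseteq> K" and "nbhd E B \<subseteq> K'"
  shows "card (nbhd E (A \<union> B)) + card (nbhd E (A \<inter> B)) \<le> card K + card K'"
proof -
  let ?P = "nbhd E (A \<union> B)" and ?Q = "nbhd E (A \<inter> B)"
  have PQ: "?P \<union> ?Q \<subseteq> K \<union> K'" "?P \<inter> ?Q \<subseteq> K \<inter> K'"
    using assms(3,4) unfolding nbhd_def by blast+
  then have "finite ?P" "finite ?Q"
    using assms(1,2) by (auto intro: finite_subset)
  then have "card ?P + card ?Q = card (?P \<union> ?Q) + card (?P \<inter> ?Q)"
    by (rule card_Un_Int)
  also have "\<dots> \<le> card (K \<union> K') + card (K \<inter> K')"
    using PQ assms(1,2) by (intro add_mono card_mono) auto
  also have "\<dots> = card K + card K'"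
    using card_Un_Int[OF assms(1,2)] by simp
  finally show ?thesis .
qed

lemma witness_card_le:
  assumes "finite V" and "witness V E X Y S KS" and "is_sep V E X Y K" and "K \<inter> S = {}"
  shows "card KS \<le> card K"
proof -
  define M where "M = {card K | K. is_sep V E X Y K \<and> K \<inter> S = {}}"
  define N where "N = {card K | K. is_sep V E X Y K}"
  have "M \<subseteq> {..card V}" "N \<subseteq> {..card V}"
    using assms(1) by (auto simp: M_def N_def is_sep_def intro!: card_mono)
  then have fin: "finite M" "finite N" by (auto intro: finite_subset)
  have "card KS \<in> M" using assms(2) by (auto simp: M_def witness_def)
  then have "Min M \<in> M" using Min_in[OF fin(1)] by blast
  then obtain K0 where K0: "is_sep V E X Y K0" "card K0 = Min M"
    by (auto simp: M_def)
  have "card K0 \<in> N" using K0(1) by (auto simp: N_def)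
  then have "sep_num V E X Y \<le> Min M"
    using Min_le[OF fin(2)] K0(2) by (simp add: sep_num_def N_def)
  moreover have "sep_num V E X Y \<le> card KS"
    using Min_le[OF fin(2), of "card KS"] assms(2)
    by (auto simp: sep_num_def N_def witness_def)
  moreover have "card KS - sep_num V E X Y = Min M - sep_num V E X Y"
    using assms(2) by (simp add: witness_def excess_def cover_excess_def M_def)
  ultimately have "card KS = Min M" by linarith
  moreover have "card K \<in> M" using assms(3,4) by (auto simp: M_def)
  ultimately show ?thesis using Min_le[OF fin(1)] by simp
qed

lemma separators_uncross:
  assumes "graph V E" and "X \<subseteq> V" and "Y \<subseteq> V"
    and "is_sep V E X Y K" and "is_sep V E X Y K'"
  defines "A \<equiv> NR V E Y K" and "B \<equiv> NR V E Y K'"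
  shows "is_sep V E X Y (nbhd E (A \<union> B))" and "is_sep V E X Y (nbhd E (A \<inter> B))"
    and "card (nbhd E (A \<union> B)) + card (nbhd E (A \<inter> B)) \<le> card K + card K'"
proof -
  have sym: "\<forall>u v. E u v \<longrightarrow> E v u" and "finite V"
    using assms(1) by (auto simp: graph_def)
  have XAB: "X \<subseteq> A \<inter> B"
    using subset_NR[OF sym _ assms(2)] assms(4,5) by (auto simp: A_def B_def)
  have YAB: "Y \<inter> (A \<union> B) = {}"
    using NR_disjoint[OF assms(4,3)] NR_disjoint[OF assms(5,3)] by (auto simp: A_def B_def)
  have NA: "nbhd E A \<subseteq> K" and NB: "nbhd E B \<subseteq> K'"
    using nbhd_NR_subset[OF assms(1)] by (auto simp: A_def B_def)
  have KK': "K \<union> K' \<subseteq> V - (X \<union> Y)"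
    using assms(4,5) by (auto simp: is_sep_def)
  then have "finite K" "finite K'"
    using \<open>finite V\<close> by (auto intro: finite_subset)
  then show "card (nbhd E (A \<union> B)) + card (nbhd E (A \<inter> B)) \<le> card K + card K'"
    using card_nbhd_Un_Int_le NA NB by blast
  have "nbhd E (A \<union> B) \<union> nbhd E (A \<inter> B) \<subseteq> K \<union> K'"
    using NA NB unfolding nbhd_def by blast
  then have "Y \<inter> nbhd E (A \<union> B) = {}" "Y \<inter> nbhd E (A \<inter> B) = {}"
    using KK' by blast+
  then show "is_sep V E X Y (nbhd E (A \<union> B))" "is_sep V E X Y (nbhd E (A \<inter> B))"
    using XAB YAB by (auto intro!: is_sep_nbhd[OF assms(1)])
qed

theorem lemma3:
  fixes V :: "'a set" and E :: "'a \<Rightarrow> 'a \<Rightarrow> bool" and X Y S K1 KS :: "'a set"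
  assumes "graph V E"
    and "X \<subseteq> V" and "Y \<subseteq> V" and "X \<inter> Y = {}"
    and "normalized V E X Y"
    and "S \<subseteq> nbhd E X"
    and "\<forall>s\<in>S. \<forall>y\<in>Y. \<not> E s y"
    and "important V E X Y K1" and "K1 \<inter> S = {}"
    and "important_witness V E X Y S KS"
  shows "sep_ge V E Y K1 KS"
proof -
  have sep1: "is_sep V E X Y K1"
    using assms(8) by (simp add: important_def min_sep_def)
  have wit: "witness V E X Y S KS"
    using assms(10) by (simp add: important_witness_def)
  then have sepS: "is_sep V E X Y KS" "KS \<inter> S = {}" by (auto simp: witness_def)
  define A where "A = NR V E Y K1"
  define B where "B = NR V E Y KS"
  define P where "P = nbhd E (A \<union> B)"
  define Q where "Q = nbhd E (A \<inter> B)"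
  note uncross = separators_uncross[OF assms(1-3) sep1 sepS(1), folded A_def B_def P_def Q_def]
  have "S \<subseteq> A \<inter> B"
    using nbhd_subset_NR[OF assms(1,2) _ _ assms(6)] sep1 sepS assms(9)
    by (auto simp: A_def B_def)
  then have "Q \<inter> S = {}" by (auto simp: Q_def nbhd_def)
  then have "card KS \<le> card Q"
    using witness_card_le[OF _ wit uncross(2)] assms(1) by (simp add: graph_def)
  then have "card P \<le> card K1" using uncross(3) by linarith
  then have "\<not> sep_less V E Y K1 P"
    using assms(8) uncross(1) unfolding important_def by blast
  moreover have AB_NR: "A \<union> B \<subseteq> NR V E Y P"
    unfolding P_def by (rule subset_NR_nbhd[OF assms(1)])
      (use NR_disjoint[OF sep1 assms(3)] NR_disjoint[OF sepS(1) assms(3)]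
        in \<open>auto simp: A_def B_def NR_def\<close>)
  ultimately have "NR V E Y P = A"
    by (auto simp: sep_less_def sep_ge_def A_def)
  then have "B \<subseteq> A" using AB_NR by blast
  then show ?thesis by (simp add: sep_ge_def A_def B_def)
qed

end
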